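(* Let $A=\langle Q,F,\delta,\gamma\rangle$ be a well-structured pomset automaton and let $q\xrightarrow{U}_A q'$ be a run. Then: (i) the run is trivial if and only if $U$ is empty; (ii) it is a sequential unit run if and only if $U$ is primitive; (iii) it is a composite run if and only if $U$ is sequential; (iv) it is a parallel unit run if and only if $U$ is parallel.
   Context: Fix a finite alphabet $\Sigma$. Pomsets are isomorphism classes of finite labelled posets over $\Sigma$; $1$ is the empty pomset; a pomset is primitive if it has exactly one element. Sequential composition $U\cdot V$ is the disjoint union with every element of $U$ below every element of $V$; parallel composition $U\parallel V$ is the disjoint union of the orders. $\mathsf{SP}(\Sigma)$ is the smallest set containing $1$ and the primitive pomsets closed under $\cdot,\parallel$. A pomset $U$ is sequential if $U=U_1\cdot U_2$ for non-empty $U_1,U_2$, and parallel if $U=U_1\parallel U_2$ for non-empty $U_1,U_2$. A pomset automaton is $A=\langle Q,F,\delta,\gamma\rangle$ with $F\subseteq Q$, $\delta:Q\times\Sigma\to2^Q$, $\gamma:Q\times\mathbb{M}(Q)\to2^Q$ ($\mathbb{M}(Q)$ finite multisets over $Q$), each $q$ having finitely many $\phi$ with $\gamma(q,\phi)\ne\emptyset$. The run relation $\to_A\subseteq Q\times\mathsf{SP}(\Sigma)\times Q$ is the smallest relation closed under the rules: (R1) $q\xrightarrow{1}_A q$; (R2) $q\xrightarrow{a}_A q'$ if $q'\in\delta(q,a)$; (R3) $q\xrightarrow{U\cdot V}_A q'$ if $q\xrightarrow{U}_A q''$ and $q''\xrightarrow{V}_A q'$; (R4) $q\xrightarrow{U_1\parallel\cdots\parallel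 U_n}_A q'$ if $q'\in\gamma(q,\{\!|q_1,\dots,q_n|\!\})$ and for each $i$ some $q_i'\in F$ has $q_i\xrightarrow{U_i}_A q_i'$. A run $q\xrightarrow{U}_A q'$ is trivial if it follows by (R1) (i.e. $q=q'$ and $U=1$); a sequential unit run if it follows by (R2) (i.e. $U=a\in\Sigma$ and $q'\in\delta(q,a)$); a parallel unit run if it follows by (R4); and composite if there are $U_1,U_2$ and $q''$ with $U=U_1\cdot U_2$, $q\xrightarrow{U_1}_A q''$, $q''\xrightarrow{U_2}_A q'$, neither of which is trivial. $A$ is well-structured if for all $q,q'\in Q$, $\phi\in\mathbb{M}(Q)$ with $q'\in\phi$ and $\gamma(q,\phi)\ne\emptyset$: $|\phi|\ge2$, $q'\notin F$, and $\gamma(q',\phi')\cap F=\emptyset$ for every $\phi'\in\mathbb{M}(Q)$. *)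

theory Defs
  imports Main "HOL-Library.Multiset"
begin

text \<open>A pomset is an isomorphism class of finite labelled posets. We work with
concrete representatives whose carrier is a finite set of natural numbers, and
state every notion up to isomorphism.\<close>

record 'a lposet =
  car :: "nat set"
  le  :: "(nat \<times> nat) set"
  lbl :: "nat \<Rightarrow> 'a"

definition is_pomset :: "'a lposet \<Rightarrow> bool" where
  "is_pomset P \<longleftrightarrow> finite (car P) \<and> le P \<subseteq> car P \<times> car P \<and>
     refl_on (car P) (le P) \<and> antisym (le P) \<and> trans (le P)"

definition pom_iso :: "'a lposet \<Rightarrow> 'a lposet \<Rightarrow> bool" where
  "pom_iso P R \<longleftrightarrow> (\<exists>f. bij_betw f (car P) (car R) \<and>
     (\<forall>x\<in>car P. lbl R (f x) = lbl P x) \<and>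
     (\<forall>x\<in>car P. \<forall>y\<in>car P. (x, y) \<in> le P \<longleftrightarrow> (f x, f y) \<in> le R))"

definition pempty :: "'a lposet" where
  "pempty = \<lparr>car = {}, le = {}, lbl = (\<lambda>_. undefined)\<rparr>"

definition prim :: "'a \<Rightarrow> 'a lposet" where
  "prim a = \<lparr>car = {0}, le = {(0, 0)}, lbl = (\<lambda>_. a)\<rparr>"

text \<open>Disjoint union: the left component is placed on even numbers, the right one on odd numbers.\<close>
definition dlbl :: "'a lposet \<Rightarrow> 'a lposet \<Rightarrow> nat \<Rightarrow> 'a" where
  "dlbl U V n = (if even n then lbl U (n div 2) else lbl V (n div 2))"

definition par_comp :: "'a lposet \<Rightarrow> 'a lposet \<Rightarrow> 'a lposet" where
  "par_comp U V = \<lparr>car = (\<lambda>x. 2 * x) ` car U \<union> (\<lambda>x. 2 * x + 1) ` car V,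
     le = (\<lambda>(x, y). (2 * x, 2 * y)) ` le U \<union> (\<lambda>(x, y). (2 * x + 1, 2 * y + 1)) ` le V,
     lbl = dlbl U V\<rparr>"

definition seq_comp :: "'a lposet \<Rightarrow> 'a lposet \<Rightarrow> 'a lposet" where
  "seq_comp U V = \<lparr>car = (\<lambda>x. 2 * x) ` car U \<union> (\<lambda>x. 2 * x + 1) ` car V,
     le = (\<lambda>(x, y). (2 * x, 2 * y)) ` le U \<union> (\<lambda>(x, y). (2 * x + 1, 2 * y + 1)) ` le V
          \<union> {(2 * x, 2 * y + 1) | x y. x \<in> car U \<and> y \<in> car V},
     lbl = dlbl U V\<rparr>"

fun par_list :: "'a lposet list \<Rightarrow> 'a lposet" where
  "par_list [] = pempty"
| "par_list (U # Us) = par_comp U (par_list Us)"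

definition is_empty_pomset :: "'a lposet \<Rightarrow> bool" where
  "is_empty_pomset U \<longleftrightarrow> car U = {}"

definition is_primitive :: "'a lposet \<Rightarrow> bool" where
  "is_primitive U \<longleftrightarrow> card (car U) = 1"

definition is_sequential :: "'a lposet \<Rightarrow> bool" where
  "is_sequential U \<longleftrightarrow> (\<exists>U1 U2. is_pomset U1 \<and> is_pomset U2 \<and>
     \<not> is_empty_pomset U1 \<and> \<not> is_empty_pomset U2 \<and> pom_iso U (seq_comp U1 U2))"

definition is_parallel :: "'a lposet \<Rightarrow> bool" where
  "is_parallel U \<longleftrightarrow> (\<exists>U1 U2. is_pomset U1 \<and> is_pomset U2 \<and>
     \<not> is_empty_pomset U1 \<and> \<not> is_empty_pomset U2 \<and> pom_iso U (par_comp U1 U2))"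

text \<open>An automaton is given by its accepting states \<open>F\<close>, sequential transitions \<open>\<delta>\<close>
and parallel transitions \<open>\<gamma>\<close>; the state space is the type \<open>'q\<close>.\<close>

definition pomset_automaton ::
  "'q set \<Rightarrow> ('q \<Rightarrow> 'a \<Rightarrow> 'q set) \<Rightarrow> ('q \<Rightarrow> 'q multiset \<Rightarrow> 'q set) \<Rightarrow> bool" where
  "pomset_automaton F \<delta> \<gamma> \<longleftrightarrow> (\<forall>q. finite {\<phi>. \<gamma> q \<phi> \<noteq> {}})"

inductive run ::
  "'q set \<Rightarrow> ('q \<Rightarrow> 'a \<Rightarrow> 'q set) \<Rightarrow> ('q \<Rightarrow> 'q multiset \<Rightarrow> 'q set) \<Rightarrow>
   'q \<Rightarrow> 'a lposet \<Rightarrow> 'q \<Rightarrow> bool"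
  for F \<delta> \<gamma> where
  R1: "is_pomset W \<Longrightarrow> pom_iso W pempty \<Longrightarrow> run F \<delta> \<gamma> q W q"
| R2: "is_pomset W \<Longrightarrow> pom_iso W (prim a) \<Longrightarrow> q' \<in> \<delta> q a \<Longrightarrow> run F \<delta> \<gamma> q W q'"
| R3: "is_pomset W \<Longrightarrow> pom_iso W (seq_comp U V) \<Longrightarrow> run F \<delta> \<gamma> q U q'' \<Longrightarrow>
       run F \<delta> \<gamma> q'' V q' \<Longrightarrow> run F \<delta> \<gamma> q W q'"
| R4: "is_pomset W \<Longrightarrow> pom_iso W (par_list (map snd xs)) \<Longrightarrow>
       q' \<in> \<gamma> q (mset (map fst xs)) \<Longrightarrow>
       (\<forall>i<length xs. \<exists>qf\<in>F. run F \<delta> \<gamma> (fst (xs ! i)) (snd (xs ! i)) qf) \<Longrightarrow>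
       run F \<delta> \<gamma> q W q'"

definition trivial_run where
  "trivial_run F \<delta> \<gamma> q U q' \<longleftrightarrow> q = q' \<and> pom_iso U pempty"

definition seq_unit_run where
  "seq_unit_run F \<delta> \<gamma> q U q' \<longleftrightarrow> (\<exists>a. pom_iso U (prim a) \<and> q' \<in> \<delta> q a)"

definition par_unit_run where
  "par_unit_run F \<delta> \<gamma> q U q' \<longleftrightarrow> (\<exists>xs. pom_iso U (par_list (map snd xs)) \<and>
     q' \<in> \<gamma> q (mset (map fst xs)) \<and>
     (\<forall>i<length xs. \<exists>qf\<in>F. run F \<delta> \<gamma> (fst (xs ! i)) (snd (xs ! i)) qf))"

definition composite_run where
  "composite_run F \<delta> \<gamma> q U q' \<longleftrightarrow> (\<exists>U1 U2 q''. pom_iso U (seq_comp U1 U2) \<and>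
     run F \<delta> \<gamma> q U1 q'' \<and> run F \<delta> \<gamma> q'' U2 q' \<and>
     \<not> trivial_run F \<delta> \<gamma> q U1 q'' \<and> \<not> trivial_run F \<delta> \<gamma> q'' U2 q')"

definition well_structured ::
  "'q set \<Rightarrow> ('q \<Rightarrow> 'q multiset \<Rightarrow> 'q set) \<Rightarrow> bool" where
  "well_structured F \<gamma> \<longleftrightarrow>
     (\<forall>q \<phi>. \<gamma> q \<phi> \<noteq> {} \<longrightarrow> size \<phi> \<ge> 2) \<and>
     (\<forall>q q' \<phi>. q' \<in># \<phi> \<and> \<gamma> q \<phi> \<noteq> {} \<longrightarrow> q' \<notin> F \<and> (\<forall>\<phi>'. \<gamma> q' \<phi>' \<inter> F = {}))"

end

theory Submission
  imports Defs
begin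

(* In a well-structured automaton every run on the empty pomset is trivial: a parallel
   transition forks into at least two threads that start outside F, and by induction a
   thread reading nothing ends where it started, so it cannot accept. Consequently a
   composition with an empty factor collapses to a run of the other factor, and every run is of
   one of the four kinds. Each kind determines the shape of the pomset read: empty, a single
   element, a sequential composition of nonempty factors, or (since a fork has at least two
   nonempty threads) a parallel one. These shapes are pairwise exclusive -- by counting
   elements, and because a parallel composition is disconnected whereas a sequential one is
   not -- so each kind of run corresponds exactly to its shape. *)

lemma pom_iso_sym:
  assumes "pom_iso P R" shows "pom_iso R P"
proof -
  obtain f where f: "bij_betw f (car P) (car R)" "\<forall>x\<in>car P. lbl R (f x) = lbl P x"
    "\<forall>x\<in>car P. \<forall>y\<in>car P. (x, y) \<in> le P \<longleftrightarrow> (f x, f y) \<in> le R"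
    using assms unfolding pom_iso_def by blast
  have "bij_betw (inv_into (car P) f) (car R) (car P)"
    using f(1) by (rule bij_betw_inv_into)
  moreover have "\<And>y. y \<in> car R \<Longrightarrow> inv_into (car P) f y \<in> car P \<and> f (inv_into (car P) f y) = y"
    using f(1) by (meson bij_betwE bij_betw_inv_into bij_betw_inv_into_right)
  ultimately show ?thesis
    unfolding pom_iso_def using f(2,3) by metis
qed

lemma pom_iso_trans:
  assumes "pom_iso P R" "pom_iso R S" shows "pom_iso P S"
proof -
  obtain f where f: "bij_betw f (car P) (car R)" "\<forall>x\<in>car P. lbl R (f x) = lbl P x"
    "\<forall>x\<in>car P. \<forall>y\<in>car P. (x, y) \<in> le P \<longleftrightarrow> (f x, f y) \<in> le R"
    using assms(1) unfolding pom_iso_def by blast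
  obtain g where g: "bij_betw g (car R) (car S)" "\<forall>x\<in>car R. lbl S (g x) = lbl R x"
    "\<forall>x\<in>car R. \<forall>y\<in>car R. (x, y) \<in> le R \<longleftrightarrow> (g x, g y) \<in> le S"
    using assms(2) unfolding pom_iso_def by blast
  have "\<And>x. x \<in> car P \<Longrightarrow> f x \<in> car R"
    using f(1) by (meson bij_betwE)
  then show ?thesis
    unfolding pom_iso_def using bij_betw_trans[OF f(1) g(1)] f(2,3) g(2,3)
    by (intro exI[of _ "g \<circ> f"]) auto
qed

lemma pom_iso_card: "pom_iso P R \<Longrightarrow> card (car P) = card (car R)"
  unfolding pom_iso_def using bij_betw_same_card by blast

lemma pom_iso_empty_iff: "pom_iso P R \<Longrightarrow> car P = {} \<longleftrightarrow> car R = {}"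
  unfolding pom_iso_def by (metis bij_betw_empty1 bij_betw_empty2)

lemma pom_iso_pempty_iff:
  assumes "is_pomset U" shows "pom_iso U pempty \<longleftrightarrow> car U = {}"
proof
  assume "pom_iso U pempty"
  then show "car U = {}" by (simp add: pom_iso_empty_iff pempty_def)
next
  assume "car U = {}"
  with assms show "pom_iso U pempty"
    unfolding pom_iso_def pempty_def is_pomset_def by (intro exI[of _ id]) auto
qed

lemma pom_iso_image:
  assumes "is_pomset R" "inj_on g (car R)" "car P = g ` car R"
    and "le P = (\<lambda>(x, y). (g x, g y)) ` le R" "\<forall>x\<in>car R. lbl P (g x) = lbl R x"
  shows "pom_iso R P"
proof -
  have le_R: "le R \<subseteq> car R \<times> car R" using assms(1) by (simp add: is_pomset_def)
  have "(x, y) \<in> le R \<longleftrightarrow> (g x, g y) \<in> le P" if "x \<in> car R" "y \<in> car R" for x y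
  proof
    assume "(g x, g y) \<in> le P"
    then obtain a b where "(a, b) \<in> le R" "g a = g x" "g b = g y" using assms(4) by auto
    moreover from this(1) have "a \<in> car R" "b \<in> car R" using le_R by auto
    ultimately show "(x, y) \<in> le R" using assms(2) that by (metis inj_onD)
  qed (use assms(4) in auto)
  moreover have "bij_betw g (car R) (car P)" using assms(2,3) by (simp add: bij_betw_def)
  ultimately show ?thesis unfolding pom_iso_def using assms(5) by metis
qed

lemma car_seq_comp_eq_car_par_comp: "car (seq_comp U V) = car (par_comp U V)"
  by (simp add: seq_comp_def par_comp_def)

lemma card_car_par_comp:
  assumes "finite (car U)" "finite (car V)"
  shows "card (car (par_comp U V)) = card (car U) + card (car V)"
proof -
  have "(\<lambda>x. 2 * x) ` car U \<inter> (\<lambda>x. 2 * x + 1) ` car V = {}"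
    by auto presburger
  then show ?thesis
    using assms by (simp add: par_comp_def card_Un_disjoint card_image inj_on_def)
qed

lemma car_par_list_empty_iff: "car (par_list Us) = {} \<longleftrightarrow> (\<forall>U\<in>set Us. car U = {})"
  by (induction Us) (auto simp: pempty_def par_comp_def)

lemma is_pomset_pempty: "is_pomset pempty"
  unfolding is_pomset_def pempty_def by (auto simp: refl_on_def antisym_def trans_def)

lemma le_par_comp_iff:
  "(x, y) \<in> le (par_comp U V) \<longleftrightarrow>
     (even x \<and> even y \<and> (x div 2, y div 2) \<in> le U) \<or> (odd x \<and> odd y \<and> (x div 2, y div 2) \<in> le V)"
proof
  assume "(x, y) \<in> le (par_comp U V)"
  then show "(even x \<and> even y \<and> (x div 2, y div 2) \<in> le U) \<or> (odd x \<and> odd y \<and> (x div 2, y div 2) \<in> le V)"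
    by (auto simp: par_comp_def)
next
  have "even x \<Longrightarrow> even y \<Longrightarrow> (x div 2, y div 2) \<in> le U \<Longrightarrow> (x, y) \<in> (\<lambda>(a, b). (2 * a, 2 * b)) ` le U"
    by (rule image_eqI[where x = "(x div 2, y div 2)"]) simp_all
  moreover have "odd x \<Longrightarrow> odd y \<Longrightarrow> (x div 2, y div 2) \<in> le V \<Longrightarrow> (x, y) \<in> (\<lambda>(a, b). (2 * a + 1, 2 * b + 1)) ` le V"
    by (rule image_eqI[where x = "(x div 2, y div 2)"]) simp_all
  moreover assume "(even x \<and> even y \<and> (x div 2, y div 2) \<in> le U) \<or> (odd x \<and> odd y \<and> (x div 2, y div 2) \<in> le V)"
  ultimately show "(x, y) \<in> le (par_comp U V)"
    unfolding par_comp_def lposet.simps by blast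
qed

lemma is_pomset_par_comp:
  assumes "is_pomset U" "is_pomset V" shows "is_pomset (par_comp U V)"
proof -
  have "antisym (le U)" "antisym (le V)" "trans (le U)" "trans (le V)"
    using assms unfolding is_pomset_def by auto
  have "antisym (le (par_comp U V))"
    using \<open>antisym (le U)\<close> \<open>antisym (le V)\<close> unfolding antisym_def le_par_comp_iff
    by (metis dvd_mult_div_cancel odd_two_times_div_two_succ)
  moreover have "trans (le (par_comp U V))"
    using \<open>trans (le U)\<close> \<open>trans (le V)\<close> unfolding trans_def le_par_comp_iff by blast
  moreover have "le U \<subseteq> car U \<times> car U" "refl_on (car U) (le U)"
    "le V \<subseteq> car V \<times> car V" "refl_on (car V) (le V)"
    using assms unfolding is_pomset_def by auto
  then have "le (par_comp U V) \<subseteq> car (par_comp U V) \<times> car (par_comp U V)"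
    "refl_on (car (par_comp U V)) (le (par_comp U V))"
    unfolding par_comp_def refl_on_def by auto
  moreover have "finite (car (par_comp U V))"
    using assms unfolding is_pomset_def par_comp_def by simp
  ultimately show ?thesis unfolding is_pomset_def by blast
qed

lemma is_pomset_par_list: "\<forall>U\<in>set Us. is_pomset U \<Longrightarrow> is_pomset (par_list Us)"
  by (induction Us) (auto simp: is_pomset_pempty is_pomset_par_comp)

lemma seq_comp_pempty_left:
  assumes "is_pomset U" "car U = {}" "is_pomset V" shows "pom_iso (seq_comp U V) V"
proof -
  have "le U = {}" using assms(1,2) by (simp add: is_pomset_def)
  then have "pom_iso V (seq_comp U V)"
    using assms(2,3) by (intro pom_iso_image) (auto simp: seq_comp_def dlbl_def inj_on_def)
  then show ?thesis by (rule pom_iso_sym)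
qed

lemma seq_comp_pempty_right:
  assumes "is_pomset V" "car V = {}" "is_pomset U" shows "pom_iso (seq_comp U V) U"
proof -
  have "le V = {}" using assms(1,2) by (simp add: is_pomset_def)
  then have "pom_iso U (seq_comp U V)"
    using assms(2,3) by (intro pom_iso_image) (auto simp: seq_comp_def dlbl_def inj_on_def)
  then show ?thesis by (rule pom_iso_sym)
qed

lemma two_le_card_car_par_comp:
  assumes "is_pomset U" "is_pomset V" "car U \<noteq> {}" "car V \<noteq> {}"
  shows "2 \<le> card (car (par_comp U V))"
proof -
  have "finite (car U)" "finite (car V)" using assms(1,2) by (simp_all add: is_pomset_def)
  moreover have "0 < card (car U)" "0 < card (car V)"
    using assms(3,4) calculation by (simp_all add: card_gt_0_iff)
  ultimately show ?thesis by (simp add: card_car_par_comp)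
qed

lemma is_sequential_card:
  assumes "is_sequential U" shows "2 \<le> card (car U)"
proof -
  obtain U1 U2 where "is_pomset U1" "is_pomset U2" "car U1 \<noteq> {}" "car U2 \<noteq> {}"
    "pom_iso U (seq_comp U1 U2)"
    using assms unfolding is_sequential_def is_empty_pomset_def by blast
  then show ?thesis
    using two_le_card_car_par_comp[of U1 U2] by (simp add: pom_iso_card car_seq_comp_eq_car_par_comp)
qed

lemma is_parallel_card:
  assumes "is_parallel U" shows "2 \<le> card (car U)"
proof -
  obtain U1 U2 where "is_pomset U1" "is_pomset U2" "car U1 \<noteq> {}" "car U2 \<noteq> {}"
    "pom_iso U (par_comp U1 U2)"
    using assms unfolding is_parallel_def is_empty_pomset_def by blast
  then show ?thesis using two_le_card_car_par_comp[of U1 U2] by (simp add: pom_iso_card)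
qed

definition disconnected :: "'a lposet \<Rightarrow> bool" where
  "disconnected P \<longleftrightarrow> (\<exists>A. A \<subseteq> car P \<and> A \<noteq> {} \<and> A \<noteq> car P \<and>
     (\<forall>a\<in>A. \<forall>b\<in>car P - A. (a, b) \<notin> le P \<and> (b, a) \<notin> le P))"

lemma disconnected_pom_iso:
  assumes "pom_iso P R" "disconnected R" shows "disconnected P"
proof -
  obtain f where f: "bij_betw f (car P) (car R)"
    "\<forall>x\<in>car P. \<forall>y\<in>car P. (x, y) \<in> le P \<longleftrightarrow> (f x, f y) \<in> le R"
    using assms(1) unfolding pom_iso_def by blast
  then have im: "f ` car P = car R" by (simp add: bij_betw_def)
  obtain A where A: "A \<subseteq> car R" "A \<noteq> {}" "A \<noteq> car R"
    "\<forall>a\<in>A. \<forall>b\<in>car R - A. (a, b) \<notin> le R \<and> (b, a) \<notin> le R"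
    using assms(2) unfolding disconnected_def by blast
  let ?A = "car P \<inter> f -` A"
  have "?A \<noteq> {}"
  proof -
    obtain a where "a \<in> A" using A(2) by blast
    then have "a \<in> f ` car P" using A(1) im by auto
    then obtain x where "x \<in> car P" "f x = a" by blast
    then show ?thesis using \<open>a \<in> A\<close> by blast
  qed
  moreover have "?A \<noteq> car P"
  proof -
    obtain b where "b \<in> car R - A" using A(1,3) by blast
    then have "b \<in> f ` car P" using im by auto
    then obtain x where "x \<in> car P" "f x = b" by blast
    then show ?thesis using \<open>b \<in> car R - A\<close> by blast
  qed
  moreover have "(a, b) \<notin> le P \<and> (b, a) \<notin> le P" if "a \<in> ?A" "b \<in> car P - ?A" for a b
  proof -
    have "f a \<in> A" "f b \<in> car R - A" using that im by auto
    then show ?thesis using A(4) f(2) that by blast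
  qed
  ultimately show ?thesis unfolding disconnected_def by (intro exI[of _ ?A]) blast
qed

lemma disconnected_par_comp:
  assumes "car U \<noteq> {}" "car V \<noteq> {}" shows "disconnected (par_comp U V)"
proof -
  let ?X = "(\<lambda>x. 2 * x) ` car U"
  obtain y where "y \<in> car V" using assms by blast
  then have "2 * y + 1 \<in> car (par_comp U V) - ?X"
    by (auto simp: par_comp_def) presburger
  moreover have "?X \<subseteq> car (par_comp U V)" "?X \<noteq> {}"
    using assms by (auto simp: par_comp_def)
  moreover have "odd b" if "b \<in> car (par_comp U V) - ?X" for b
    using that by (auto simp: par_comp_def)
  then have "\<forall>a\<in>?X. \<forall>b\<in>car (par_comp U V) - ?X. (a, b) \<notin> le (par_comp U V) \<and> (b, a) \<notin> le (par_comp U V)"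
    by (auto simp: le_par_comp_iff)
  ultimately show ?thesis unfolding disconnected_def by (intro exI[of _ ?X]) blast
qed

lemma not_disconnected_seq_comp:
  assumes "car U \<noteq> {}" "car V \<noteq> {}" shows "\<not> disconnected (seq_comp U V)"
proof
  let ?X = "(\<lambda>x. 2 * x) ` car U" and ?Y = "(\<lambda>x. 2 * x + 1) ` car V"
  assume "disconnected (seq_comp U V)"
  then obtain A where A: "A \<subseteq> car (seq_comp U V)" "A \<noteq> {}" "A \<noteq> car (seq_comp U V)"
    and sep: "\<And>a b. a \<in> A \<Longrightarrow> b \<in> car (seq_comp U V) - A \<Longrightarrow> (a, b) \<notin> le (seq_comp U V) \<and> (b, a) \<notin> le (seq_comp U V)"
    unfolding disconnected_def by blast
  have car: "car (seq_comp U V) = ?X \<union> ?Y" by (simp add: seq_comp_def)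
  have below: "(x, y) \<in> le (seq_comp U V)" if "x \<in> ?X" "y \<in> ?Y" for x y
    using that by (auto simp: seq_comp_def)
  have same_side: "x \<in> A \<longleftrightarrow> y \<in> A" if "x \<in> ?X" "y \<in> ?Y" for x y
    using sep below[OF that] that car by blast
  (* every element is comparable with x0 or with y0, and x0 is comparable with y0 *)
  obtain x0 y0 where "x0 \<in> ?X" "y0 \<in> ?Y" using assms by blast
  then have "\<forall>z \<in> car (seq_comp U V). z \<in> A \<longleftrightarrow> x0 \<in> A"
    using same_side car by blast
  then show False using A by blast
qed

lemma not_sequential_and_parallel: "is_sequential U \<Longrightarrow> \<not> is_parallel U"
  unfolding is_sequential_def is_parallel_def is_empty_pomset_def
  by (meson disconnected_pom_iso disconnected_par_comp pom_iso_sym pom_iso_trans not_disconnected_seq_comp)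

lemma par_list_parallel:
  assumes "2 \<le> length Vs" "\<forall>V\<in>set Vs. is_pomset V \<and> car V \<noteq> {}" "pom_iso W (par_list Vs)"
  shows "is_parallel W"
proof -
  obtain V1 V2 Vs' where Vs: "Vs = V1 # V2 # Vs'"
    using assms(1) by (metis Suc_le_length_iff numeral_2_eq_2)
  have rest: "\<forall>V\<in>set (V2 # Vs'). is_pomset V \<and> car V \<noteq> {}" using assms(2) Vs by simp
  then have "is_pomset (par_list (V2 # Vs'))" by (intro is_pomset_par_list) blast
  moreover have "car (par_list (V2 # Vs')) \<noteq> {}" unfolding car_par_list_empty_iff using rest by auto
  ultimately show ?thesis
    using assms(2,3) Vs unfolding is_parallel_def is_empty_pomset_def by auto
qed

lemma run_is_pomset: "run F \<delta> \<gamma> q W q' \<Longrightarrow> is_pomset W"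
  by (cases rule: run.cases) auto

lemma well_structured_forkD:
  assumes "well_structured F \<gamma>" "q' \<in> \<gamma> q \<phi>"
  shows "2 \<le> size \<phi>" "p \<in># \<phi> \<Longrightarrow> p \<notin> F"
  using assms unfolding well_structured_def by blast+

lemma run_empty_same_state:
  assumes ws: "well_structured F \<gamma>"
  shows "run F \<delta> \<gamma> q W q' \<Longrightarrow> car W = {} \<Longrightarrow> q = q'"
proof (induction rule: run.induct)
  case (R1 W q)
  then show ?case by simp
next
  case (R2 W a q' q)
  then show ?case by (simp add: pom_iso_empty_iff prim_def)
next
  case (R3 W U V q q'' q')
  then have "car (seq_comp U V) = {}" by (simp add: pom_iso_empty_iff)
  then have "car U = {}" "car V = {}" by (auto simp: seq_comp_def)
  then show ?case using R3.IH by simp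
next
  case (R4 W xs q' q)
  have "xs \<noteq> []" using well_structured_forkD(1)[OF ws R4(3)] by auto
  obtain p V where first: "xs ! 0 = (p, V)" by fastforce
  have "(p, V) \<in> set xs" using first \<open>xs \<noteq> []\<close> by (metis nth_mem length_greater_0_conv)
  then have "p \<notin> F" using well_structured_forkD(2)[OF ws R4(3)] by force
  moreover have "car (par_list (map snd xs)) = {}" using R4 by (simp add: pom_iso_empty_iff)
  then have "car V = {}" using \<open>(p, V) \<in> set xs\<close> by (force simp: car_par_list_empty_iff)
  then have "p \<in> F" using R4(4) first \<open>xs \<noteq> []\<close> by fastforce
  ultimately show ?case by blast
qed

lemma trivial_run_iff_empty:
  assumes "well_structured F \<gamma>" "run F \<delta> \<gamma> q U q'"
  shows "trivial_run F \<delta> \<gamma> q U q' \<longleftrightarrow> car U = {}"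
  using run_empty_same_state[OF assms] pom_iso_pempty_iff[OF run_is_pomset[OF assms(2)]]
  unfolding trivial_run_def by blast

lemma seq_unit_run_primitive:
  assumes "seq_unit_run F \<delta> \<gamma> q U q'" shows "is_primitive U"
proof -
  obtain a where "pom_iso U (prim a)" using assms unfolding seq_unit_run_def by blast
  from pom_iso_card[OF this] show ?thesis by (simp add: is_primitive_def prim_def)
qed

lemma composite_run_sequential:
  assumes ws: "well_structured F \<gamma>" and "composite_run F \<delta> \<gamma> q U q'"
  shows "is_sequential U"
proof -
  obtain U1 U2 q'' where "pom_iso U (seq_comp U1 U2)"
    and runs: "run F \<delta> \<gamma> q U1 q''" "run F \<delta> \<gamma> q'' U2 q'"
    and "\<not> trivial_run F \<delta> \<gamma> q U1 q''" "\<not> trivial_run F \<delta> \<gamma> q'' U2 q'"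
    using assms(2) unfolding composite_run_def by blast
  moreover have "car U1 \<noteq> {}" "car U2 \<noteq> {}"
    using calculation(4,5) trivial_run_iff_empty[OF ws runs(1)] trivial_run_iff_empty[OF ws runs(2)]
    by blast+
  moreover have "is_pomset U1" "is_pomset U2" using runs by (simp_all add: run_is_pomset)
  ultimately show ?thesis unfolding is_sequential_def is_empty_pomset_def by blast
qed

lemma par_unit_thread_nonempty:
  assumes ws: "well_structured F \<gamma>" and "q' \<in> \<gamma> q (mset (map fst xs))"
    and "\<forall>i<length xs. \<exists>qf\<in>F. run F \<delta> \<gamma> (fst (xs ! i)) (snd (xs ! i)) qf"
    and "(p, V) \<in> set xs"
  shows "is_pomset V \<and> car V \<noteq> {}"
proof -
  obtain i where "i < length xs" "xs ! i = (p, V)" using assms(4) by (auto simp: in_set_conv_nth)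
  then obtain qf where qf: "qf \<in> F" "run F \<delta> \<gamma> p V qf" using assms(3) by (metis fst_conv snd_conv)
  have "p \<in># mset (map fst xs)" using assms(4) by (metis fst_conv image_eqI set_map set_mset_mset)
  then have "p \<notin> F" using well_structured_forkD(2)[OF ws assms(2)] by blast
  then show ?thesis
    using qf run_empty_same_state[OF ws qf(2)] run_is_pomset[OF qf(2)] by blast
qed

lemma par_unit_run_parallel:
  assumes ws: "well_structured F \<gamma>" and "par_unit_run F \<delta> \<gamma> q U q'"
  shows "is_parallel U"
proof -
  obtain xs where xs: "pom_iso U (par_list (map snd xs))" "q' \<in> \<gamma> q (mset (map fst xs))"
    "\<forall>i<length xs. \<exists>qf\<in>F. run F \<delta> \<gamma> (fst (xs ! i)) (snd (xs ! i)) qf"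
    using assms(2) unfolding par_unit_run_def by blast
  have "2 \<le> length (map snd xs)" using well_structured_forkD(1)[OF ws xs(2)] by simp
  moreover have "\<forall>V\<in>set (map snd xs). is_pomset V \<and> car V \<noteq> {}"
    using par_unit_thread_nonempty[OF ws xs(2,3)] by auto
  ultimately show ?thesis using xs(1) by (rule par_list_parallel)
qed

lemma run_kinds_pom_iso:
  assumes "pom_iso W V"
  shows "trivial_run F \<delta> \<gamma> q V q' \<Longrightarrow> trivial_run F \<delta> \<gamma> q W q'"
    and "seq_unit_run F \<delta> \<gamma> q V q' \<Longrightarrow> seq_unit_run F \<delta> \<gamma> q W q'"
    and "composite_run F \<delta> \<gamma> q V q' \<Longrightarrow> composite_run F \<delta> \<gamma> q W q'"
    and "par_unit_run F \<delta> \<gamma> q V q' \<Longrightarrow> par_unit_run F \<delta> \<gamma> q W q'"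
  using pom_iso_trans[OF assms]
  unfolding trivial_run_def seq_unit_run_def composite_run_def par_unit_run_def
  by (elim exE conjE; blast)+

lemma run_kind_cases:
  assumes ws: "well_structured F \<gamma>"
  shows "run F \<delta> \<gamma> q W q' \<Longrightarrow> trivial_run F \<delta> \<gamma> q W q' \<or> seq_unit_run F \<delta> \<gamma> q W q'
    \<or> composite_run F \<delta> \<gamma> q W q' \<or> par_unit_run F \<delta> \<gamma> q W q'"
proof (induction rule: run.induct)
  case (R1 W q)
  then show ?case by (simp add: trivial_run_def)
next
  case (R2 W a q' q)
  then show ?case by (auto simp: seq_unit_run_def)
next
  case (R3 W U V q q'' q')
  have U: "is_pomset U" and V: "is_pomset V" using R3.hyps(3,4) by (simp_all add: run_is_pomset)
  consider "car U = {}" | "car V = {}" | "car U \<noteq> {}" "car V \<noteq> {}" by blast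
  then show ?case
  proof cases
    case 1
    then have "q = q''" "pom_iso W V"
      using run_empty_same_state[OF ws R3.hyps(3)] pom_iso_trans[OF R3.hyps(2) seq_comp_pempty_left[OF U _ V]]
      by simp_all
    then show ?thesis using R3.IH(2) run_kinds_pom_iso[of W V F \<delta> \<gamma> q'' q'] by auto
  next
    case 2
    then have "q'' = q'" "pom_iso W U"
      using run_empty_same_state[OF ws R3.hyps(4)] pom_iso_trans[OF R3.hyps(2) seq_comp_pempty_right[OF V _ U]]
      by simp_all
    then show ?thesis using R3.IH(1) run_kinds_pom_iso[of W U F \<delta> \<gamma> q q''] by auto
  next
    case 3
    then have "\<not> trivial_run F \<delta> \<gamma> q U q''" "\<not> trivial_run F \<delta> \<gamma> q'' V q'"
      by (simp_all add: trivial_run_def pom_iso_pempty_iff[OF U] pom_iso_pempty_iff[OF V])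
    then show ?thesis using R3.hyps(2-4) unfolding composite_run_def by blast
  qed
next
  case (R4 W xs q' q)
  then have "\<forall>i<length xs. \<exists>qf\<in>F. run F \<delta> \<gamma> (fst (xs ! i)) (snd (xs ! i)) qf" by blast
  then show ?case using R4(2,3) unfolding par_unit_run_def by blast
qed

lemma pomset_shapes_exclusive:
  shows "is_empty_pomset U \<Longrightarrow> \<not> is_primitive U"
    and "is_empty_pomset U \<Longrightarrow> \<not> is_sequential U"
    and "is_empty_pomset U \<Longrightarrow> \<not> is_parallel U"
    and "is_primitive U \<Longrightarrow> \<not> is_sequential U"
    and "is_primitive U \<Longrightarrow> \<not> is_parallel U"
    and "is_sequential U \<Longrightarrow> \<not> is_parallel U"
  using is_sequential_card[of U] is_parallel_card[of U] not_sequential_and_parallel[of U]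
  by (auto simp: is_empty_pomset_def is_primitive_def)

theorem lemma5p5:
  fixes F :: "'q set" and \<delta> :: "'q \<Rightarrow> 'a::finite \<Rightarrow> 'q set"
    and \<gamma> :: "'q \<Rightarrow> 'q multiset \<Rightarrow> 'q set" and U :: "'a lposet"
  assumes "pomset_automaton F \<delta> \<gamma>"
    and "well_structured F \<gamma>"
    and "run F \<delta> \<gamma> q U q'"
  shows "(trivial_run F \<delta> \<gamma> q U q' \<longleftrightarrow> is_empty_pomset U)
       \<and> (seq_unit_run F \<delta> \<gamma> q U q' \<longleftrightarrow> is_primitive U)
       \<and> (composite_run F \<delta> \<gamma> q U q' \<longleftrightarrow> is_sequential U)
       \<and> (par_unit_run F \<delta> \<gamma> q U q' \<longleftrightarrow> is_parallel U)"
proof -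
  note ws = assms(2) and r = assms(3)
  have "trivial_run F \<delta> \<gamma> q U q' \<or> seq_unit_run F \<delta> \<gamma> q U q'
      \<or> composite_run F \<delta> \<gamma> q U q' \<or> par_unit_run F \<delta> \<gamma> q U q'"
    using run_kind_cases[OF ws r] .
  moreover have "trivial_run F \<delta> \<gamma> q U q' \<Longrightarrow> is_empty_pomset U"
    using trivial_run_iff_empty[OF ws r] by (simp add: is_empty_pomset_def)
  moreover have "seq_unit_run F \<delta> \<gamma> q U q' \<Longrightarrow> is_primitive U"
    by (rule seq_unit_run_primitive)
  moreover have "composite_run F \<delta> \<gamma> q U q' \<Longrightarrow> is_sequential U"
    by (rule composite_run_sequential[OF ws])
  moreover have "par_unit_run F \<delta> \<gamma> q U q' \<Longrightarrow> is_parallel U"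
    by (rule par_unit_run_parallel[OF ws])
  ultimately show ?thesis using pomset_shapes_exclusive[of U] by blast
qed

end
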